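(* Let $d\ge 1$ be an integer. For each $i\in[d]$ let $x^i=(x^i_1,x^i_2,x^i_3)\in\mathbb{R}^3$ with $x^i_1<x^i_2<x^i_3$, and for each $\mathbf t=(t_1,\dots,t_d)\in[3]^d$ let $z_{\mathbf t}\in\mathbb{R}^{d-1}$. Put $P_{\mathbf t}:=(x^1_{t_1},\dots,x^d_{t_d},z_{\mathbf t})\in\mathbb{R}^{2d-1}$ and, for $i\in[d]$ and $j\in[3]$, define $A^i_j:=\operatorname{conv}\{P_{\mathbf t}: \mathbf t\in[3]^d,\ t_i=j\}$. Then there exist an index $i\in[d]$ and a line $\ell\subset\mathbb{R}^{2d-1}$ such that every point $p\in\ell$ satisfies $p_k=x^k_2$ for all $k\in[d]\setminus\{i\}$ (where $p_k$ is the $k$-th coordinate of $p$), and $\ell$ intersects each of $A^i_1,A^i_2,A^i_3$.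
   Context: $[d]=\{1,\dots,d\}$, $[3]=\{1,2,3\}$. *)

theory Defs
  imports "HOL-Analysis.Analysis" "HOL-Library.FuncSet"
begin

text \<open>Points of R^n are represented as functions nat => real that vanish
  outside the coordinate index set {1..n}.\<close>
definition Rn :: "nat \<Rightarrow> (nat \<Rightarrow> real) set" where
  "Rn n = {p. \<forall>k. k \<notin> {1..n} \<longrightarrow> p k = 0}"

definition conv :: "(nat \<Rightarrow> real) set \<Rightarrow> (nat \<Rightarrow> real) set" where
  "conv S = {p. \<exists>F w. finite F \<and> F \<noteq> {} \<and> F \<subseteq> S \<and> (\<forall>q\<in>F. 0 \<le> w q)
      \<and> sum w F = 1 \<and> p = (\<lambda>k. \<Sum>q\<in>F. w q * q k)}"

text \<open>The line through a with direction v (v nonzero is required separately).\<close>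
definition line :: "(nat \<Rightarrow> real) \<Rightarrow> (nat \<Rightarrow> real) \<Rightarrow> (nat \<Rightarrow> real) set" where
  "line a v = {(\<lambda>k. a k + s * v k) | s. True}"

definition tuples :: "nat \<Rightarrow> (nat \<Rightarrow> nat) set" where
  "tuples d = PiE {1..d} (\<lambda>_. {1..3})"

definition Ppt :: "nat \<Rightarrow> (nat \<Rightarrow> nat \<Rightarrow> real) \<Rightarrow> ((nat \<Rightarrow> nat) \<Rightarrow> nat \<Rightarrow> real)
    \<Rightarrow> (nat \<Rightarrow> nat) \<Rightarrow> (nat \<Rightarrow> real)" where
  "Ppt d x z t = (\<lambda>k. if 1 \<le> k \<and> k \<le> d then x k (t k)
                     else if d < k \<and> k \<le> 2 * d - 1 then z t (k - d) else 0)"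

definition Aset :: "nat \<Rightarrow> (nat \<Rightarrow> nat \<Rightarrow> real) \<Rightarrow> ((nat \<Rightarrow> nat) \<Rightarrow> nat \<Rightarrow> real)
    \<Rightarrow> nat \<Rightarrow> nat \<Rightarrow> (nat \<Rightarrow> real) set" where
  "Aset d x z i j = conv (Ppt d x z ` {t \<in> tuples d. t i = j})"

end

theory Submission
  imports Defs
begin

text \<open>For \<open>S \<subseteq> [d]\<close> let \<open>Q S\<close> be the barycentre of the points \<open>P t\<close> under the
  product distribution on \<open>[3]^d\<close> whose \<open>l\<close>-th factor is the point mass at \<open>2\<close> if
  \<open>l \<notin> S\<close>, and the distribution on \<open>{1, 3}\<close> with mean \<open>x l 2\<close> if \<open>l \<in> S\<close>. All \<open>Q S\<close>
  have the coordinates \<open>x l 2\<close> in the first \<open>d\<close> places, so they differ only in the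
  \<open>d - 1\<close> coordinates of \<open>z\<close>. Hence for some \<open>i\<close> the hulls of \<open>{Q S | i \<in> S}\<close> and
  \<open>{Q S | i \<notin> S}\<close> meet: otherwise Gordan's alternative gives functionals \<open>y i\<close> that are
  positive on \<open>Q S - Q ([d] - S)\<close> for \<open>i \<in> S\<close> and negative for \<open>i \<notin> S\<close>; these \<open>d\<close>
  functionals on a \<open>(d - 1)\<close>-dimensional space are linearly dependent, and evaluating a
  dependency at \<open>Q S - Q ([d] - S)\<close>, where \<open>S\<close> is the set of indices with positive
  coefficient, gives a positive number equal to \<open>0\<close>. Finally, replacing the \<open>i\<close>-th factor
  by the point mass at \<open>j\<close> in the convex combinations of a common point yields points of
  \<open>A i 1\<close>, \<open>A i 2\<close>, \<open>A i 3\<close> that agree with \<open>x k 2\<close> at every \<open>k \<in> [d] - {i}\<close>, and the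
  second is a convex combination of the other two.\<close>

lemma conv_mono: "S \<subseteq> T \<Longrightarrow> conv S \<subseteq> conv T"
  unfolding conv_def by blast

lemma conv_superset: "p \<in> S \<Longrightarrow> p \<in> conv S"
  unfolding conv_def by (rule CollectI, rule exI[of _ "{p}"], rule exI[of _ "\<lambda>_. 1"]) auto

lemma mem_conv_finite_subset: "p \<in> conv S \<Longrightarrow> \<exists>F. finite F \<and> F \<subseteq> S \<and> p \<in> conv F"
  unfolding conv_def by blast

lemma mem_conv_finite:
  assumes "finite S"
  shows "p \<in> conv S \<longleftrightarrow>
    (\<exists>w. (\<forall>q\<in>S. 0 \<le> w q) \<and> sum w S = 1 \<and> p = (\<lambda>k. \<Sum>q\<in>S. w q * q k))"
proof
  assume "p \<in> conv S"
  then obtain F w where F: "finite F" "F \<subseteq> S" "\<forall>q\<in>F. 0 \<le> w q" "sum w F = 1"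
    and p: "p = (\<lambda>k. \<Sum>q\<in>F. w q * q k)"
    unfolding conv_def by blast
  define w' where "w' q = (if q \<in> F then w q else 0)" for q
  have "(\<Sum>q\<in>S. w' q * f q) = (\<Sum>q\<in>F. w q * f q)" for f :: "(nat \<Rightarrow> real) \<Rightarrow> real"
    by (rule sum.mono_neutral_cong_right[OF assms F(2)]) (auto simp: w'_def)
  from this[of "\<lambda>_. 1"] this[of "\<lambda>q. q _"] show "\<exists>w. (\<forall>q\<in>S. 0 \<le> w q) \<and> sum w S = 1 \<and> p = (\<lambda>k. \<Sum>q\<in>S. w q * q k)"
    using F(3,4) p by (intro exI[of _ w']) (auto simp: w'_def)
next
  assume "\<exists>w. (\<forall>q\<in>S. 0 \<le> w q) \<and> sum w S = 1 \<and> p = (\<lambda>k. \<Sum>q\<in>S. w q * q k)"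
  moreover from this have "S \<noteq> {}" by auto
  ultimately show "p \<in> conv S"
    using assms unfolding conv_def by blast
qed

lemma conv_convex_sum:
  assumes "finite I" "\<forall>i\<in>I. 0 \<le> w i" "sum w I = 1" "\<forall>i\<in>I. p i \<in> conv S"
  shows "(\<lambda>k. \<Sum>i\<in>I. w i * p i k) \<in> conv S"
proof -
  have "\<forall>i\<in>I. \<exists>F. finite F \<and> F \<subseteq> S \<and> p i \<in> conv F"
    using assms(4) mem_conv_finite_subset by blast
  then obtain F where F: "\<forall>i\<in>I. finite (F i) \<and> F i \<subseteq> S \<and> p i \<in> conv (F i)"
    by (metis (no_types) bchoice)
  define G where "G = (\<Union>i\<in>I. F i)"
  have G: "finite G" "G \<subseteq> S"
    using assms(1) F by (auto simp: G_def)
  have "\<forall>i\<in>I. p i \<in> conv G"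
  proof
    fix i assume "i \<in> I"
    then have "F i \<subseteq> G" by (auto simp: G_def)
    then show "p i \<in> conv G"
      using conv_mono F \<open>i \<in> I\<close> by blast
  qed
  then have "\<forall>i\<in>I. \<exists>W. (\<forall>q\<in>G. 0 \<le> W q) \<and> sum W G = 1 \<and> p i = (\<lambda>k. \<Sum>q\<in>G. W q * q k)"
    unfolding mem_conv_finite[OF G(1)] .
  then obtain W where W: "\<forall>i\<in>I. (\<forall>q\<in>G. 0 \<le> W i q) \<and> sum (W i) G = 1
      \<and> p i = (\<lambda>k. \<Sum>q\<in>G. W i q * q k)"
    by (metis (no_types) bchoice)
  define w' where "w' q = (\<Sum>i\<in>I. w i * W i q)" for q
  have sums: "(\<Sum>q\<in>G. w' q * f q) = (\<Sum>i\<in>I. w i * (\<Sum>q\<in>G. W i q * f q))" for f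
    by (simp add: w'_def sum_distrib_left sum_distrib_right mult.assoc) (rule sum.swap)
  have "\<forall>q\<in>G. 0 \<le> w' q"
    using assms(2) W by (auto simp: w'_def intro!: sum_nonneg)
  moreover have "sum w' G = 1"
    using sums[of "\<lambda>_. 1"] assms(3) W by simp
  moreover have "(\<lambda>k. \<Sum>i\<in>I. w i * p i k) = (\<lambda>k. \<Sum>q\<in>G. w' q * q k)"
    unfolding sums using W by (auto intro!: sum.cong)
  ultimately have "(\<lambda>k. \<Sum>i\<in>I. w i * p i k) \<in> conv G"
    unfolding mem_conv_finite[OF G(1)] by (intro exI[of _ w'] conjI)
  then show ?thesis
    using conv_mono[OF G(2)] by (rule rev_subsetD)
qed

lemma conv_subset:
  assumes "Y \<subseteq> conv X"
  shows "conv Y \<subseteq> conv X"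
proof
  fix p assume "p \<in> conv Y"
  then obtain F w where "finite F" "F \<subseteq> Y" "\<forall>q\<in>F. 0 \<le> w q" "sum w F = 1"
    and "p = (\<lambda>k. \<Sum>q\<in>F. w q * q k)"
    unfolding conv_def by blast
  then show "p \<in> conv X"
    using conv_convex_sum[of F w "\<lambda>q. q" X] assms by blast
qed

lemma mem_conv_image:
  assumes "finite A"
  shows "v \<in> conv (u ` A) \<longleftrightarrow>
    (\<exists>g. (\<forall>a\<in>A. 0 \<le> g a) \<and> sum g A = 1 \<and> v = (\<lambda>k. \<Sum>a\<in>A. g a * u a k))"
proof
  assume "v \<in> conv (u ` A)"
  then obtain w where w: "\<forall>q\<in>u ` A. 0 \<le> w q" "sum w (u ` A) = 1"
    "v = (\<lambda>k. \<Sum>q\<in>u ` A. w q * q k)"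
    unfolding mem_conv_finite[OF finite_imageI[OF assms]] by blast
  define g where "g a = w (u a) / card {b \<in> A. u b = u a}" for a
  have "(\<Sum>a\<in>A. g a * f (u a)) = (\<Sum>q\<in>u ` A. w q * f q)" for f
  proof -
    have "(\<Sum>a\<in>A. g a * f (u a)) = (\<Sum>q\<in>u ` A. \<Sum>a\<in>{b \<in> A. u b = q}. g a * f (u a))"
      by (rule sum.image_gen[OF assms])
    also have "\<dots> = (\<Sum>q\<in>u ` A. w q * f q)"
    proof (rule sum.cong[OF refl])
      fix q assume "q \<in> u ` A"
      then have "card {b \<in> A. u b = q} \<noteq> 0"
        using assms by (auto simp: card_eq_0_iff)
      then show "(\<Sum>a\<in>{b \<in> A. u b = q}. g a * f (u a)) = w q * f q"
        by (simp add: g_def)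
    qed
    finally show ?thesis .
  qed
  from this[of "\<lambda>_. 1"] this[of "\<lambda>q. q _"]
  show "\<exists>g. (\<forall>a\<in>A. 0 \<le> g a) \<and> sum g A = 1 \<and> v = (\<lambda>k. \<Sum>a\<in>A. g a * u a k)"
    using w by (intro exI[of _ g]) (auto simp: g_def)
next
  assume "\<exists>g. (\<forall>a\<in>A. 0 \<le> g a) \<and> sum g A = 1 \<and> v = (\<lambda>k. \<Sum>a\<in>A. g a * u a k)"
  then show "v \<in> conv (u ` A)"
    using conv_convex_sum[OF assms, of _ u "u ` A"] conv_superset by blast
qed

lemma interpolate_finite:
  fixes A B :: "'a :: linordered_field set"
  assumes "finite A" "finite B" "\<forall>a\<in>A. \<forall>b\<in>B. a < b"
  shows "\<exists>t. (\<forall>a\<in>A. a < t) \<and> (\<forall>b\<in>B. t < b)"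
proof (cases "A = {}")
  case True
  have "\<forall>b\<in>B. Min (insert 0 B) - 1 < b"
  proof
    fix b assume "b \<in> B"
    then have "Min (insert 0 B) \<le> b"
      using assms(2) by (intro Min_le) auto
    then show "Min (insert 0 B) - 1 < b" by simp
  qed
  with True show ?thesis by blast
next
  case False
  define M where "M = Max A"
  have "\<forall>a\<in>A. a \<le> M" "M \<in> A"
    using assms(1) False by (simp_all add: M_def)
  define N where "N = Min (insert (M + 1) B)"
  have "M < N"
    using assms \<open>M \<in> A\<close> by (simp add: N_def)
  moreover have "\<forall>b\<in>B. N \<le> b"
    using assms(2) by (simp add: N_def)
  ultimately have "(\<forall>a\<in>A. a < (M + N) / 2) \<and> (\<forall>b\<in>B. (M + N) / 2 < b)"
    using \<open>\<forall>a\<in>A. a \<le> M\<close> by (auto simp: field_simps intro: le_less_trans less_le_trans)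
  then show ?thesis by blast
qed

definition hyperplane_crossing :: "nat \<Rightarrow> (nat \<Rightarrow> real) \<Rightarrow> (nat \<Rightarrow> real) \<Rightarrow> nat \<Rightarrow> real" where
  "hyperplane_crossing m p q = (\<lambda>k. (q m * p k - p m * q k) / (q m - p m))"

lemma hyperplane_crossing_eq_0:
  "hyperplane_crossing m p q m = 0"
  "p k = 0 \<Longrightarrow> q k = 0 \<Longrightarrow> hyperplane_crossing m p q k = 0"
  by (simp_all add: hyperplane_crossing_def mult.commute)

lemma hyperplane_crossing_mem_conv:
  assumes "0 < p m" "q m < 0"
  shows "hyperplane_crossing m p q \<in> conv {p, q}"
proof -
  have "p \<noteq> q" using assms by auto
  define w where "w r = (if r = p then q m / (q m - p m) else - p m / (q m - p m))" for r
  have "\<forall>r\<in>{p, q}. 0 \<le> w r"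
    using assms by (auto simp: w_def divide_nonpos_neg divide_nonneg_neg)
  moreover have "sum w {p, q} = 1"
    using \<open>p \<noteq> q\<close> assms by (simp add: w_def diff_divide_distrib[symmetric])
  moreover have "hyperplane_crossing m p q = (\<lambda>k. \<Sum>r\<in>{p, q}. w r * r k)"
    using \<open>p \<noteq> q\<close> by (simp add: hyperplane_crossing_def w_def diff_divide_distrib)
  ultimately show ?thesis
    unfolding mem_conv_finite[OF finite.insertI[OF finite.insertI[OF finite.emptyI]]]
    by (intro exI[of _ w] conjI)
qed

lemma sum_hyperplane_crossing:
  "(\<Sum>k\<in>K. y k * hyperplane_crossing m p q k)
    = (q m * (\<Sum>k\<in>K. y k * p k) - p m * (\<Sum>k\<in>K. y k * q k)) / (q m - p m)"
  by (simp add: hyperplane_crossing_def sum_divide_distrib[symmetric] sum_distrib_left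
      sum_subtractf right_diff_distrib ac_simps)

definition fourier_motzkin :: "nat \<Rightarrow> (nat \<Rightarrow> real) set \<Rightarrow> (nat \<Rightarrow> real) set" where
  "fourier_motzkin m X = {x\<in>X. x m = 0}
     \<union> (\<lambda>(p, q). hyperplane_crossing m p q) ` ({p\<in>X. 0 < p m} \<times> {q\<in>X. q m < 0})"

lemma finite_fourier_motzkin: "finite X \<Longrightarrow> finite (fourier_motzkin m X)"
  by (simp add: fourier_motzkin_def)

lemma fourier_motzkin_subset_conv: "fourier_motzkin m X \<subseteq> conv X"
proof
  fix x assume "x \<in> fourier_motzkin m X"
  then consider "x \<in> X"
    | p q where "p \<in> X" "q \<in> X" "0 < p m" "q m < 0" "x = hyperplane_crossing m p q"
    unfolding fourier_motzkin_def by auto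
  then show "x \<in> conv X"
  proof cases
    case (2 p q)
    then have "conv {p, q} \<subseteq> conv X"
      by (intro conv_mono) simp
    with 2 show ?thesis
      using hyperplane_crossing_mem_conv by blast
  qed (rule conv_superset)
qed

lemma fourier_motzkin_supported:
  assumes "\<forall>x\<in>X. \<forall>k. k \<notin> insert m K \<longrightarrow> x k = 0"
  shows "\<forall>x\<in>fourier_motzkin m X. \<forall>k. k \<notin> K \<longrightarrow> x k = 0"
proof (intro ballI allI impI)
  fix x k assume x: "x \<in> fourier_motzkin m X" and "k \<notin> K"
  show "x k = 0"
  proof (cases "k = m")
    case True
    with x show ?thesis
      by (auto simp: fourier_motzkin_def hyperplane_crossing_eq_0)
  next
    case False
    with assms \<open>k \<notin> K\<close> have zero: "\<forall>p\<in>X. p k = 0"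
      by blast
    from x consider "x \<in> X" | p q where "p \<in> X" "q \<in> X" "x = hyperplane_crossing m p q"
      unfolding fourier_motzkin_def by auto
    then show ?thesis
    proof cases
      case (2 p q)
      then show ?thesis
        using zero by (simp add: hyperplane_crossing_eq_0)
    qed (use zero in auto)
  qed
qed

lemma strict_separator_extend:
  assumes "finite K" "finite X" "m \<notin> K"
    and sep: "\<forall>x\<in>fourier_motzkin m X. 0 < (\<Sum>k\<in>K. y k * x k)"
  shows "\<exists>y'. \<forall>x\<in>X. 0 < (\<Sum>k\<in>insert m K. y' k * x k)"
proof -
  define s where "s x = (\<Sum>k\<in>K. y k * x k)" for x
  have "- s p / p m < - s q / q m" if "p \<in> X" "q \<in> X" "0 < p m" "q m < 0" for p q
  proof -
    have "hyperplane_crossing m p q \<in> fourier_motzkin m X"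
      using that unfolding fourier_motzkin_def by blast
    then have "0 < (\<Sum>k\<in>K. y k * hyperplane_crossing m p q k)"
      using sep by blast
    then have "0 < (q m * s p - p m * s q) / (q m - p m)"
      by (simp add: s_def sum_hyperplane_crossing)
    then have "q m * s p - p m * s q < 0"
      using that by (simp add: divide_less_0_iff zero_less_divide_iff)
    then show ?thesis
      using that by (simp add: field_simps)
  qed
  then have "\<exists>t. (\<forall>a\<in>(\<lambda>p. - s p / p m) ` {p\<in>X. 0 < p m}. a < t)
      \<and> (\<forall>b\<in>(\<lambda>q. - s q / q m) ` {q\<in>X. q m < 0}. t < b)"
    using assms(2) by (intro interpolate_finite) auto
  then obtain t where
    t_pos: "\<forall>p\<in>X. 0 < p m \<longrightarrow> - s p / p m < t" and
    t_neg: "\<forall>q\<in>X. q m < 0 \<longrightarrow> t < - s q / q m"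
    by auto
  have "0 < (\<Sum>k\<in>insert m K. (y(m := t)) k * x k)" if "x \<in> X" for x
  proof -
    have "(\<Sum>k\<in>insert m K. (y(m := t)) k * x k) = t * x m + s x"
      using assms(1,3) by (auto simp: s_def intro!: sum.cong)
    moreover consider "x m = 0" | "0 < x m" | "x m < 0"
      by linarith
    then have "0 < t * x m + s x"
    proof cases
      case 1
      then show ?thesis
        using sep that by (simp add: s_def fourier_motzkin_def)
    next
      case 2
      then have "- s x < t * x m"
        using t_pos that pos_divide_less_eq[OF 2] by blast
      then show ?thesis by linarith
    next
      case 3
      then have "- s x < t * x m"
        using t_neg that neg_less_divide_eq[OF 3] by blast
      then show ?thesis by linarith
    qed
    ultimately show ?thesis by simp
  qed
  then show ?thesis by blast
qed

lemma gordan_alternative: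
  assumes "finite K" "finite X" "\<forall>x\<in>X. \<forall>k. k \<notin> K \<longrightarrow> x k = 0"
  shows "(\<lambda>_. 0) \<in> conv X \<or> (\<exists>y. \<forall>x\<in>X. 0 < (\<Sum>k\<in>K. y k * x k))"
  using assms
proof (induction K arbitrary: X rule: finite_induct)
  case empty
  show ?case
  proof (cases "X = {}")
    case False
    then obtain x where "x \<in> X" by blast
    moreover have "x = (\<lambda>_. 0)"
      using empty.prems(2) \<open>x \<in> X\<close> by auto
    ultimately show ?thesis
      using conv_superset[of x X] by simp
  qed simp
next
  case (insert m K)
  consider "(\<lambda>_. 0) \<in> conv (fourier_motzkin m X)"
    | y where "\<forall>x\<in>fourier_motzkin m X. 0 < (\<Sum>k\<in>K. y k * x k)"
    using insert.IH[OF finite_fourier_motzkin fourier_motzkin_supported] insert.prems by blast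
  then show ?case
  proof cases
    case 1
    then show ?thesis
      using conv_subset[OF fourier_motzkin_subset_conv] by blast
  next
    case 2
    then show ?thesis
      using strict_separator_extend[OF insert.hyps(1) insert.prems(1) insert.hyps(2)] by blast
  qed
qed

lemma supported_vectors_dependent:
  fixes v :: "'a \<Rightarrow> nat \<Rightarrow> real"
  assumes "finite K" "finite I" "card K < card I" "\<forall>i\<in>I. \<forall>k. k \<notin> K \<longrightarrow> v i k = 0"
  shows "\<exists>c. (\<exists>i\<in>I. c i \<noteq> 0) \<and> (\<forall>k. (\<Sum>i\<in>I. c i * v i k) = 0)"
  using assms
proof (induction K arbitrary: I v rule: finite_induct)
  case empty
  then show ?case
    by (intro exI[of _ "\<lambda>_. 1"]) (auto simp: card_gt_0_iff)
next
  case (insert m K)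
  show ?case
  proof (cases "\<forall>i\<in>I. v i m = 0")
    case True
    then have "\<forall>i\<in>I. \<forall>k. k \<notin> K \<longrightarrow> v i k = 0"
      using insert.prems(3) by (metis insertE)
    moreover have "card K < card I"
      using insert by simp
    ultimately show ?thesis
      using insert.IH insert.prems(1) by blast
  next
    case False
    then obtain i0 where i0: "i0 \<in> I" "v i0 m \<noteq> 0" by blast
    define I' where "I' = I - {i0}"
    \<comment> \<open>Gaussian elimination of the coordinate \<open>m\<close> using the pivot \<open>v i0\<close>.\<close>
    define v' where "v' i k = v i k - v i m / v i0 m * v i0 k" for i k
    have "card K < card I'"
      using i0 insert by (simp add: I'_def)
    moreover have "\<forall>i\<in>I'. \<forall>k. k \<notin> K \<longrightarrow> v' i k = 0"
    proof (intro ballI allI impI)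
      fix i k assume "i \<in> I'" "k \<notin> K"
      then show "v' i k = 0"
        using insert.prems(3) i0 by (cases "k = m") (auto simp: I'_def v'_def)
    qed
    ultimately obtain c' where c': "\<exists>i\<in>I'. c' i \<noteq> 0" "\<forall>k. (\<Sum>i\<in>I'. c' i * v' i k) = 0"
      using insert.IH[of I' v'] insert.prems(1) by (auto simp: I'_def)
    define c where "c = c'(i0 := - (\<Sum>i\<in>I'. c' i * v i m) / v i0 m)"
    have "(\<Sum>i\<in>I. c i * v i k) = 0" for k
    proof -
      have "(\<Sum>i\<in>I. c i * v i k) = c i0 * v i0 k + (\<Sum>i\<in>I'. c' i * v i k)"
        using i0 insert.prems(1) by (simp add: I'_def c_def sum.remove)
      also have "\<dots> = (\<Sum>i\<in>I'. c' i * v' i k)"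
        by (simp add: c_def v'_def right_diff_distrib sum_subtractf sum_distrib_right
            sum_divide_distrib mult.assoc)
      finally show ?thesis
        using c'(2) by simp
    qed
    moreover have "\<exists>i\<in>I. c i \<noteq> 0"
      using c'(1) by (auto simp: c_def I'_def)
    ultimately show ?thesis by blast
  qed
qed

lemma no_separating_family:
  fixes y :: "'a \<Rightarrow> nat \<Rightarrow> real" and u :: "'a set \<Rightarrow> nat \<Rightarrow> real"
  assumes "finite D" "finite K" "card K < card D"
    and pos: "\<And>i S. i \<in> D \<Longrightarrow> S \<subseteq> D \<Longrightarrow> i \<in> S \<Longrightarrow> 0 < (\<Sum>k\<in>K. y i k * u S k)"
    and neg: "\<And>i S. i \<in> D \<Longrightarrow> S \<subseteq> D \<Longrightarrow> i \<notin> S \<Longrightarrow> (\<Sum>k\<in>K. y i k * u S k) < 0"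
  shows False
proof -
  obtain c where c: "\<exists>i\<in>D. c i \<noteq> 0"
    "\<forall>k. (\<Sum>i\<in>D. c i * (if k \<in> K then y i k else 0)) = 0"
    using supported_vectors_dependent[OF assms(2,1,3), of "\<lambda>i k. if k \<in> K then y i k else 0"]
    by auto
  then obtain i0 where i0: "i0 \<in> D" "c i0 \<noteq> 0"
    by blast
  have dep: "(\<Sum>i\<in>D. c i * y i k) = 0" if "k \<in> K" for k
    using c(2)[rule_format, of k] that by simp
  \<comment> \<open>Test the dependency on the vertex of the cube selected by the signs of \<open>c\<close>.\<close>
  define S where "S = {i\<in>D. 0 < c i}"
  have term_pos: "0 < c i * (\<Sum>k\<in>K. y i k * u S k)" if "i \<in> D" "c i \<noteq> 0" for i
  proof (cases "0 < c i")
    case True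
    then show ?thesis using pos[of i S] that by (simp add: S_def)
  next
    case False
    then show ?thesis using neg[of i S] that by (simp add: S_def mult_neg_neg)
  qed
  have "0 = (\<Sum>k\<in>K. (\<Sum>i\<in>D. c i * y i k) * u S k)"
    using dep by simp
  also have "\<dots> = (\<Sum>i\<in>D. c i * (\<Sum>k\<in>K. y i k * u S k))"
    by (simp add: sum_distrib_left sum_distrib_right mult.assoc) (rule sum.swap)
  also have "\<dots> > 0"
    using term_pos by (intro sum_pos2[OF assms(1) i0(1)]) (auto simp: i0 less_eq_real_def)
  finally show False by simp
qed

lemma image_Diff_containing:
  assumes "i \<in> D"
  shows "(\<lambda>S. D - S) ` {S. S \<subseteq> D \<and> i \<in> S} = {S. S \<subseteq> D \<and> i \<notin> S}"
proof (intro equalityI subsetI)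
  fix T assume "T \<in> {S. S \<subseteq> D \<and> i \<notin> S}"
  then have "T = D - (D - T)" "D - T \<in> {S. S \<subseteq> D \<and> i \<in> S}"
    using assms by auto
  then show "T \<in> (\<lambda>S. D - S) ` {S. S \<subseteq> D \<and> i \<in> S}"
    by (rule image_eqI)
qed auto

lemma separator_of_disjoint_halves:
  fixes V :: "'a set \<Rightarrow> nat \<Rightarrow> real"
  assumes "finite D" "finite K" "i \<in> D"
    and V: "\<And>S T k. S \<subseteq> D \<Longrightarrow> T \<subseteq> D \<Longrightarrow> k \<notin> K \<Longrightarrow> V S k = V T k"
    and disjoint: "conv (V ` {S. S \<subseteq> D \<and> i \<in> S}) \<inter> conv (V ` {S. S \<subseteq> D \<and> i \<notin> S}) = {}"
  shows "\<exists>y. \<forall>S. S \<subseteq> D \<longrightarrow> i \<in> S \<longrightarrow> 0 < (\<Sum>k\<in>K. y k * (V S k - V (D - S) k))"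
proof -
  define A where "A = {S. S \<subseteq> D \<and> i \<in> S}"
  define u where "u S = (\<lambda>k. V S k - V (D - S) k)" for S
  have "finite A"
    using assms(1) by (simp add: A_def)
  have "(\<lambda>_. 0) \<notin> conv (u ` A)"
  proof
    assume "(\<lambda>_. 0) \<in> conv (u ` A)"
    then obtain g where g: "\<forall>S\<in>A. 0 \<le> g S" "sum g A = 1"
      and "(\<lambda>_. 0) = (\<lambda>k. \<Sum>S\<in>A. g S * u S k)"
      unfolding mem_conv_image[OF \<open>finite A\<close>] by blast
    then have "(\<lambda>k. \<Sum>S\<in>A. g S * V S k) = (\<lambda>k. \<Sum>S\<in>A. g S * V (D - S) k)"
      by (simp add: fun_eq_iff u_def right_diff_distrib sum_subtractf)
    moreover have "(\<lambda>k. \<Sum>S\<in>A. g S * V S k) \<in> conv (V ` A)"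
      using g unfolding mem_conv_image[OF \<open>finite A\<close>] by blast
    moreover have "(\<lambda>k. \<Sum>S\<in>A. g S * V (D - S) k) \<in> conv ((\<lambda>S. V (D - S)) ` A)"
      using g unfolding mem_conv_image[OF \<open>finite A\<close>] by blast
    moreover have "(\<lambda>S. V (D - S)) ` A = V ` {S. S \<subseteq> D \<and> i \<notin> S}"
      using image_Diff_containing[OF \<open>i \<in> D\<close>] unfolding A_def by (metis image_image)
    ultimately show False
      using disjoint unfolding A_def by auto
  qed
  moreover have "\<forall>x\<in>u ` A. \<forall>k. k \<notin> K \<longrightarrow> x k = 0"
    using V by (auto simp: u_def A_def)
  ultimately obtain y where "\<forall>x\<in>u ` A. 0 < (\<Sum>k\<in>K. y k * x k)"
    using gordan_alternative[OF assms(2) finite_imageI[OF \<open>finite A\<close>]] by blast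
  then have "\<forall>S\<in>A. 0 < (\<Sum>k\<in>K. y k * u S k)"
    by blast
  then show ?thesis
    unfolding A_def u_def by blast
qed

lemma cube_halves_conv_meet:
  fixes V :: "'a set \<Rightarrow> nat \<Rightarrow> real"
  assumes "finite D" "finite K" "card K < card D"
    and V: "\<And>S T k. S \<subseteq> D \<Longrightarrow> T \<subseteq> D \<Longrightarrow> k \<notin> K \<Longrightarrow> V S k = V T k"
  shows "\<exists>i\<in>D. conv (V ` {S. S \<subseteq> D \<and> i \<in> S}) \<inter> conv (V ` {S. S \<subseteq> D \<and> i \<notin> S}) \<noteq> {}"
proof (rule ccontr)
  assume "\<not> ?thesis"
  then have "conv (V ` {S. S \<subseteq> D \<and> i \<in> S}) \<inter> conv (V ` {S. S \<subseteq> D \<and> i \<notin> S}) = {}"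
    if "i \<in> D" for i
    using that by simp
  then have "\<exists>y. \<forall>S. S \<subseteq> D \<longrightarrow> i \<in> S \<longrightarrow> 0 < (\<Sum>k\<in>K. y k * (V S k - V (D - S) k))"
    if "i \<in> D" for i
    using that by (intro separator_of_disjoint_halves[OF assms(1,2) that V])
  then obtain y where pos:
    "\<And>i S. i \<in> D \<Longrightarrow> S \<subseteq> D \<Longrightarrow> i \<in> S \<Longrightarrow> 0 < (\<Sum>k\<in>K. y i k * (V S k - V (D - S) k))"
    by metis
  have neg: "(\<Sum>k\<in>K. y i k * (V S k - V (D - S) k)) < 0" if "i \<in> D" "S \<subseteq> D" "i \<notin> S" for i S
  proof -
    have "0 < (\<Sum>k\<in>K. y i k * (V (D - S) k - V (D - (D - S)) k))"
      using pos that by blast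
    then show ?thesis
      using \<open>S \<subseteq> D\<close> by (simp add: double_diff right_diff_distrib sum_subtractf)
  qed
  show False
    by (rule no_separating_family[OF assms(1-3) pos neg])
qed

lemma finite_tuples: "finite (tuples d)"
  unfolding tuples_def by (rule finite_PiE) auto

lemma sum_tuples_prod:
  fixes r :: "nat \<Rightarrow> nat \<Rightarrow> real"
  shows "(\<Sum>t\<in>tuples d. \<Prod>l\<in>{1..d}. r l (t l)) = (\<Prod>l\<in>{1..d}. \<Sum>j\<in>{1..3}. r l j)"
  unfolding tuples_def by (rule prod_sum_PiE[symmetric]) auto

lemma prod_fun_upd_remove:
  assumes "finite L" "i \<in> L"
  shows "(\<Prod>l\<in>L. (r(i := g)) l (t l)) = g (t i) * (\<Prod>l\<in>L - {i}. r l (t l))"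
proof -
  have "(\<Prod>l\<in>L - {i}. (r(i := g)) l (t l)) = (\<Prod>l\<in>L - {i}. r l (t l))"
    by (rule prod.cong) auto
  then show ?thesis
    using assms by (simp add: prod.remove)
qed

text \<open>The expectation of \<open>P t\<close> when the coordinates \<open>t l\<close> are drawn independently
  from the distributions \<open>r l\<close> on \<open>{1..3}\<close>.\<close>
definition mixture :: "nat \<Rightarrow> (nat \<Rightarrow> nat \<Rightarrow> real) \<Rightarrow> ((nat \<Rightarrow> nat) \<Rightarrow> nat \<Rightarrow> real)
    \<Rightarrow> nat \<Rightarrow> real" where
  "mixture d r P = (\<lambda>k. \<Sum>t\<in>tuples d. (\<Prod>l\<in>{1..d}. r l (t l)) * P t k)"

lemma mixture_coord:
  assumes "k \<in> {1..d}" "\<forall>l\<in>{1..d}. (\<Sum>j\<in>{1..3}. r l j) = 1"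
    and "\<forall>t\<in>tuples d. P t k = f (t k)"
  shows "mixture d r P k = (\<Sum>j\<in>{1..3}. r k j * f j)"
proof -
  define g where "g = r(k := (\<lambda>j. r k j * f j))"
  have "mixture d r P k = (\<Sum>t\<in>tuples d. \<Prod>l\<in>{1..d}. g l (t l))"
    unfolding mixture_def
  proof (rule sum.cong[OF refl])
    fix t assume "t \<in> tuples d"
    have "(\<Prod>l\<in>{1..d}. g l (t l)) = r k (t k) * f (t k) * (\<Prod>l\<in>{1..d} - {k}. r l (t l))"
      unfolding g_def prod_fun_upd_remove[OF finite_atLeastAtMost assms(1)] by simp
    moreover have "(\<Prod>l\<in>{1..d}. r l (t l)) = r k (t k) * (\<Prod>l\<in>{1..d} - {k}. r l (t l))"
      using assms(1) by (simp add: prod.remove)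
    ultimately show "(\<Prod>l\<in>{1..d}. r l (t l)) * P t k = (\<Prod>l\<in>{1..d}. g l (t l))"
      using assms(3) \<open>t \<in> tuples d\<close> by simp
  qed
  also have "\<dots> = (\<Prod>l\<in>{1..d}. \<Sum>j\<in>{1..3}. g l j)"
    by (rule sum_tuples_prod)
  also have "\<dots> = (\<Sum>j\<in>{1..3}. g k j) * (\<Prod>l\<in>{1..d} - {k}. \<Sum>j\<in>{1..3}. g l j)"
    using assms(1) by (simp add: prod.remove)
  also have "(\<Prod>l\<in>{1..d} - {k}. \<Sum>j\<in>{1..3}. g l j) = 1"
    using assms(2) by (intro prod.neutral) (auto simp: g_def)
  finally show ?thesis
    by (simp add: g_def)
qed

lemma mixture_fun_upd_combination:
  assumes "i \<in> {1..d}"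
  shows "mixture d (r(i := (\<lambda>j. a * g j + b * h j))) P k
    = a * mixture d (r(i := g)) P k + b * mixture d (r(i := h)) P k"
  unfolding mixture_def prod_fun_upd_remove[OF finite_atLeastAtMost assms]
  by (simp add: sum_distrib_left algebra_simps flip: sum.distrib)

lemma mixture_mem_conv:
  assumes "i \<in> {1..d}" and distr: "\<forall>l\<in>{1..d}. (\<forall>j\<in>{1..3}. 0 \<le> r l j) \<and> (\<Sum>j\<in>{1..3}. r l j) = 1"
    and "\<forall>j'. j' \<noteq> j \<longrightarrow> r i j' = 0"
  shows "mixture d r P \<in> conv (P ` {t \<in> tuples d. t i = j})"
proof -
  define T where "T = {t \<in> tuples d. t i = j}"
  define \<omega> where "\<omega> t = (\<Prod>l\<in>{1..d}. r l (t l))" for t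
  have "finite T"
    using finite_tuples by (simp add: T_def)
  have \<omega>_T: "\<omega> t = 0" if "t \<in> tuples d - T" for t
    unfolding \<omega>_def using that assms(1,3) by (intro prod_zero) (auto simp: T_def)
  then have "sum \<omega> T = sum \<omega> (tuples d)"
    by (intro sum.mono_neutral_left finite_tuples) (auto simp: T_def)
  also have "\<dots> = 1"
    unfolding \<omega>_def sum_tuples_prod using distr by simp
  finally have "sum \<omega> T = 1" .
  moreover have "\<forall>t\<in>T. 0 \<le> \<omega> t"
    using distr by (auto simp: \<omega>_def T_def tuples_def intro!: prod_nonneg)
  moreover have "mixture d r P = (\<lambda>k. \<Sum>t\<in>T. \<omega> t * P t k)"
    unfolding mixture_def \<omega>_def[symmetric] using \<omega>_T
    by (intro ext sum.mono_neutral_right finite_tuples) (auto simp: T_def)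
  ultimately show ?thesis
    unfolding T_def[symmetric] mem_conv_image[OF \<open>finite T\<close>] by blast
qed

lemma sum_atLeastAtMost_1_3: "(\<Sum>j\<in>{1..3::nat}. f j) = f 1 + f 2 + f 3"
proof -
  have "{1..3::nat} = {1, 2, 3}" by auto
  then show ?thesis by (simp add: add.assoc)
qed

definition mid_weight :: "(nat \<Rightarrow> nat \<Rightarrow> real) \<Rightarrow> nat \<Rightarrow> real" where
  "mid_weight x l = (x l 3 - x l 2) / (x l 3 - x l 1)"

lemma mid_weight_convex:
  assumes "x l 1 < x l 2" "x l 2 < x l 3"
  shows "0 \<le> mid_weight x l" "mid_weight x l \<le> 1"
    and "mid_weight x l * x l 1 + (1 - mid_weight x l) * x l 3 = x l 2"
proof -
  have "0 < x l 3 - x l 1"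
    using assms by simp
  then show "0 \<le> mid_weight x l" "mid_weight x l \<le> 1"
    using assms by (simp_all add: mid_weight_def)
  have "mid_weight x l * x l 1 + (1 - mid_weight x l) * x l 3 = x l 3 - mid_weight x l * (x l 3 - x l 1)"
    by (simp add: algebra_simps)
  also have "mid_weight x l * (x l 3 - x l 1) = x l 3 - x l 2"
    using \<open>0 < x l 3 - x l 1\<close> by (simp add: mid_weight_def)
  finally show "mid_weight x l * x l 1 + (1 - mid_weight x l) * x l 3 = x l 2"
    by simp
qed

definition split_distr :: "(nat \<Rightarrow> nat \<Rightarrow> real) \<Rightarrow> nat set \<Rightarrow> nat \<Rightarrow> nat \<Rightarrow> real" where
  "split_distr x S l = (if l \<in> S
     then (\<lambda>j. mid_weight x l * indicator {1} j + (1 - mid_weight x l) * indicator {3} j)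
     else indicator {2})"

lemma sum_split_distr: "(\<Sum>j\<in>{1..3}. split_distr x S l j) = 1"
  unfolding sum_atLeastAtMost_1_3 by (simp add: split_distr_def)

lemma split_distr_nonneg:
  "x l 1 < x l 2 \<Longrightarrow> x l 2 < x l 3 \<Longrightarrow> 0 \<le> split_distr x S l j"
  using mid_weight_convex(1,2)[of x l] by (simp add: split_distr_def indicator_def)

lemma split_distr_mean:
  "x l 1 < x l 2 \<Longrightarrow> x l 2 < x l 3 \<Longrightarrow> (\<Sum>j\<in>{1..3}. split_distr x S l j * x l j) = x l 2"
  using mid_weight_convex(3)[of x l] unfolding sum_atLeastAtMost_1_3 by (simp add: split_distr_def)

lemma mixture_Ppt_coord:
  assumes "k \<in> {1..d}" "\<forall>l\<in>{1..d}. (\<Sum>j\<in>{1..3}. r l j) = 1"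
  shows "mixture d r (Ppt d x z) k = (\<Sum>j\<in>{1..3}. r k j * x k j)"
  using assms by (intro mixture_coord) (auto simp: Ppt_def)

lemma mixture_Ppt_Rn: "mixture d r (Ppt d x z) \<in> Rn (2 * d - 1)"
  unfolding Rn_def
proof (intro CollectI allI impI)
  fix k assume "k \<notin> {1..2 * d - 1}"
  then have "Ppt d x z t k = 0" for t
    by (auto simp: Ppt_def)
  then show "mixture d r (Ppt d x z) k = 0"
    by (simp add: mixture_def)
qed

lemma split_mixture_eq_off_z:
  assumes "\<forall>l\<in>{1..d}. x l 1 < x l 2 \<and> x l 2 < x l 3" "k \<notin> {d + 1..2 * d - 1}"
  shows "mixture d (split_distr x S) (Ppt d x z) k = mixture d (split_distr x T) (Ppt d x z) k"
proof (cases "k \<in> {1..d}")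
  case True
  have "mixture d (split_distr x U) (Ppt d x z) k = x k 2" for U
  proof -
    have "mixture d (split_distr x U) (Ppt d x z) k = (\<Sum>j\<in>{1..3}. split_distr x U k j * x k j)"
      by (rule mixture_Ppt_coord[OF True]) (use sum_split_distr in blast)
    also have "\<dots> = x k 2"
      using assms(1) True by (intro split_distr_mean) auto
    finally show ?thesis .
  qed
  then show ?thesis by simp
next
  case False
  with assms(2) have "k \<notin> {1..2 * d - 1}" by auto
  then show ?thesis
    using mixture_Ppt_Rn by (simp add: Rn_def)
qed

lemma sum_indicator_singleton_times:
  fixes f :: "'a \<Rightarrow> real"
  assumes "finite A" "j \<in> A"
  shows "(\<Sum>j'\<in>A. indicator {j} j' * f j') = f j"
proof -
  have "(\<Sum>j'\<in>A. indicator {j} j' * f j') = (\<Sum>j'\<in>A. if j' = j then f j else 0)"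
    by (rule sum.cong) auto
  then show ?thesis
    using assms by simp
qed

lemma pinned_mixture_mem_Aset:
  assumes "\<forall>l\<in>{1..d}. x l 1 < x l 2 \<and> x l 2 < x l 3" "i \<in> {1..d}" "j \<in> {1..3}"
  shows "mixture d ((split_distr x S)(i := indicator {j})) (Ppt d x z) \<in> Aset d x z i j"
  unfolding Aset_def
proof (rule mixture_mem_conv[OF assms(2)])
  have "(\<Sum>j'\<in>{1..3}. indicator {j} j') = (1::real)"
    using sum_indicator_singleton_times[OF _ assms(3), of "\<lambda>_. 1"] by simp
  then show "\<forall>l\<in>{1..d}. (\<forall>j'\<in>{1..3}. 0 \<le> ((split_distr x S)(i := indicator {j})) l j')
      \<and> (\<Sum>j'\<in>{1..3}. ((split_distr x S)(i := indicator {j})) l j') = 1"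
    using assms(1) split_distr_nonneg sum_split_distr by auto
qed simp

lemma pinned_mixture_coord:
  assumes "\<forall>l\<in>{1..d}. x l 1 < x l 2 \<and> x l 2 < x l 3" "j \<in> {1..3}" "k \<in> {1..d}"
  shows "mixture d ((split_distr x S)(i := indicator {j})) (Ppt d x z) k
    = (if k = i then x i j else x k 2)"
proof -
  have "\<forall>l\<in>{1..d}. (\<Sum>j'\<in>{1..3}. ((split_distr x S)(i := indicator {j})) l j') = 1"
    using sum_indicator_singleton_times[OF _ assms(2), of "\<lambda>_. 1"] sum_split_distr by auto
  then have "mixture d ((split_distr x S)(i := indicator {j})) (Ppt d x z) k
      = (\<Sum>j'\<in>{1..3}. ((split_distr x S)(i := indicator {j})) k j' * x k j')"
    by (rule mixture_Ppt_coord[OF assms(3)])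
  also have "\<dots> = (if k = i then x i j else x k 2)"
  proof (cases "k = i")
    case True
    then show ?thesis
      using sum_indicator_singleton_times[OF _ assms(2)] by simp
  next
    case False
    then show ?thesis
      using assms(1,3) split_distr_mean by auto
  qed
  finally show ?thesis .
qed

lemma sum_split_mixture_mem:
  assumes "i \<in> {1..d}" "\<forall>S\<in>A. i \<in> S"
  shows "(\<Sum>S\<in>A. \<alpha> S * mixture d (split_distr x S) P k)
    = mid_weight x i * (\<Sum>S\<in>A. \<alpha> S * mixture d ((split_distr x S)(i := indicator {1})) P k)
      + (1 - mid_weight x i) * (\<Sum>S\<in>A. \<alpha> S * mixture d ((split_distr x S)(i := indicator {3})) P k)"
proof -
  have "split_distr x S = (split_distr x S)(i := (\<lambda>j. mid_weight x i * indicator {1} j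
      + (1 - mid_weight x i) * indicator {3} j))" if "S \<in> A" for S
    using assms(2) that by (auto simp: split_distr_def)
  then have "(\<Sum>S\<in>A. \<alpha> S * mixture d (split_distr x S) P k)
    = (\<Sum>S\<in>A. mid_weight x i * (\<alpha> S * mixture d ((split_distr x S)(i := indicator {1})) P k)
      + (1 - mid_weight x i) * (\<alpha> S * mixture d ((split_distr x S)(i := indicator {3})) P k))"
    by (intro sum.cong refl) (metis mixture_fun_upd_combination[OF assms(1)] distrib_left mult.left_commute)
  then show ?thesis
    by (simp add: sum.distrib sum_distrib_left)
qed

lemma split_mixture_not_mem:
  "i \<notin> S \<Longrightarrow> mixture d (split_distr x S) P = mixture d ((split_distr x S)(i := indicator {2})) P"
  by (simp add: split_distr_def fun_upd_idem)

lemma collinear_points_in_Aset: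
  fixes d :: nat and x :: "nat \<Rightarrow> nat \<Rightarrow> real" and z :: "(nat \<Rightarrow> nat) \<Rightarrow> nat \<Rightarrow> real"
  defines "Q \<equiv> \<lambda>S. mixture d (split_distr x S) (Ppt d x z)"
  assumes incr: "\<forall>l\<in>{1..d}. x l 1 < x l 2 \<and> x l 2 < x l 3" and i: "i \<in> {1..d}"
    and "conv (Q ` {S. S \<subseteq> {1..d} \<and> i \<in> S}) \<inter> conv (Q ` {S. S \<subseteq> {1..d} \<and> i \<notin> S}) \<noteq> {}"
  obtains q1 q2 q3 \<mu> where "q1 \<in> Aset d x z i 1" "q2 \<in> Aset d x z i 2" "q3 \<in> Aset d x z i 3"
    "q2 = (\<lambda>k. \<mu> * q1 k + (1 - \<mu>) * q3 k)" "q1 \<in> Rn (2 * d - 1)" "q3 \<in> Rn (2 * d - 1)"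
    "\<forall>k\<in>{1..d}. q1 k = (if k = i then x i 1 else x k 2)"
    "\<forall>k\<in>{1..d}. q3 k = (if k = i then x i 3 else x k 2)"
proof -
  define R where "R j S = mixture d ((split_distr x S)(i := indicator {j})) (Ppt d x z)" for j S
  define A1 where "A1 = {S. S \<subseteq> {1..d} \<and> i \<in> S}"
  define A0 where "A0 = {S. S \<subseteq> {1..d} \<and> i \<notin> S}"
  have "finite A1" "finite A0"
    by (auto simp: A1_def A0_def intro: finite_subset[of _ "Pow {1..d}"])
  obtain p where "p \<in> conv (Q ` A1)" "p \<in> conv (Q ` A0)"
    using assms(4) unfolding A1_def A0_def ex_in_conv[symmetric] by blast
  obtain \<alpha> where \<alpha>: "\<forall>S\<in>A1. 0 \<le> \<alpha> S" "sum \<alpha> A1 = 1"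
    and p\<alpha>: "p = (\<lambda>k. \<Sum>S\<in>A1. \<alpha> S * Q S k)"
    using \<open>p \<in> conv (Q ` A1)\<close> unfolding mem_conv_image[OF \<open>finite A1\<close>] by blast
  obtain \<beta> where \<beta>: "\<forall>S\<in>A0. 0 \<le> \<beta> S" "sum \<beta> A0 = 1"
    and p\<beta>: "p = (\<lambda>k. \<Sum>S\<in>A0. \<beta> S * Q S k)"
    using \<open>p \<in> conv (Q ` A0)\<close> unfolding mem_conv_image[OF \<open>finite A0\<close>] by blast
  define q1 where "q1 = (\<lambda>k. \<Sum>S\<in>A1. \<alpha> S * R 1 S k)"
  define q3 where "q3 = (\<lambda>k. \<Sum>S\<in>A1. \<alpha> S * R 3 S k)"
  define q2 where "q2 = (\<lambda>k. \<Sum>S\<in>A0. \<beta> S * R 2 S k)"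
  have "q1 \<in> Aset d x z i 1" "q3 \<in> Aset d x z i 3" "q2 \<in> Aset d x z i 2"
    unfolding q1_def q2_def q3_def Aset_def
    using \<alpha> \<beta> pinned_mixture_mem_Aset[OF incr i, unfolded Aset_def]
    by (auto simp: R_def intro!: conv_convex_sum \<open>finite A1\<close> \<open>finite A0\<close>)
  moreover have "q2 = (\<lambda>k. mid_weight x i * q1 k + (1 - mid_weight x i) * q3 k)"
  proof
    fix k
    have "q2 k = (\<Sum>S\<in>A1. \<alpha> S * Q S k)"
      using p\<alpha> p\<beta> split_mixture_not_mem[of i] by (simp add: q2_def Q_def R_def A0_def fun_eq_iff)
    then show "q2 k = mid_weight x i * q1 k + (1 - mid_weight x i) * q3 k"
      unfolding Q_def q1_def q3_def R_def using sum_split_mixture_mem[OF i] by (simp add: A1_def)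
  qed
  moreover have "q1 \<in> Rn (2 * d - 1)" "q3 \<in> Rn (2 * d - 1)"
    using mixture_Ppt_Rn by (simp_all add: Rn_def q1_def q3_def R_def)
  moreover have "\<forall>k\<in>{1..d}. q1 k = (if k = i then x i 1 else x k 2)"
    "\<forall>k\<in>{1..d}. q3 k = (if k = i then x i 3 else x k 2)"
    using pinned_mixture_coord[OF incr] \<alpha>(2)
    by (simp_all add: q1_def q3_def R_def flip: sum_distrib_right)
  ultimately show ?thesis
    using that by blast
qed

lemma mem_line_coord: "p \<in> line a v \<Longrightarrow> v k = 0 \<Longrightarrow> p k = a k"
  by (auto simp: line_def)

lemma line_meets_collinear_points:
  assumes "q1 \<in> A 1" "q2 \<in> A 2" "q3 \<in> A 3" "q2 = (\<lambda>k. \<mu> * q1 k + (1 - \<mu>) * q3 k)"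
  shows "\<forall>j\<in>{1..3::nat}. line q1 (\<lambda>k. q3 k - q1 k) \<inter> A j \<noteq> {}"
proof -
  have on_line: "(\<lambda>k. q1 k + s * (q3 k - q1 k)) \<in> line q1 (\<lambda>k. q3 k - q1 k)" for s
    unfolding line_def by blast
  have "q1 = (\<lambda>k. q1 k + 0 * (q3 k - q1 k))" "q2 = (\<lambda>k. q1 k + (1 - \<mu>) * (q3 k - q1 k))"
    "q3 = (\<lambda>k. q1 k + 1 * (q3 k - q1 k))"
    by (simp_all add: assms(4) algebra_simps)
  then have "q1 \<in> line q1 (\<lambda>k. q3 k - q1 k)" "q2 \<in> line q1 (\<lambda>k. q3 k - q1 k)"
    "q3 \<in> line q1 (\<lambda>k. q3 k - q1 k)"
    using on_line by metis+
  moreover have "j = 1 \<or> j = 2 \<or> j = 3" if "j \<in> {1..3}" for j :: nat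
    using that by auto
  ultimately show ?thesis
    using assms(1-3) by blast
qed

theorem proposition5:
  fixes d :: nat
    and x :: "nat \<Rightarrow> nat \<Rightarrow> real"
    and z :: "(nat \<Rightarrow> nat) \<Rightarrow> nat \<Rightarrow> real"
  assumes "d \<ge> 1"
    and "\<forall>i\<in>{1..d}. x i 1 < x i 2 \<and> x i 2 < x i 3"
  shows "\<exists>i\<in>{1..d}. \<exists>a v. a \<in> Rn (2 * d - 1) \<and> v \<in> Rn (2 * d - 1) \<and> v \<noteq> (\<lambda>_. 0)
           \<and> (\<forall>p\<in>line a v. \<forall>k\<in>{1..d} - {i}. p k = x k 2)
           \<and> (\<forall>j\<in>{1..3}. line a v \<inter> Aset d x z i j \<noteq> {})"
proof -
  let ?Q = "\<lambda>S. mixture d (split_distr x S) (Ppt d x z)"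
  have "\<exists>i\<in>{1..d}. conv (?Q ` {S. S \<subseteq> {1..d} \<and> i \<in> S}) \<inter> conv (?Q ` {S. S \<subseteq> {1..d} \<and> i \<notin> S}) \<noteq> {}"
    using assms(1)
    by (intro cube_halves_conv_meet[of "{1..d}" "{d + 1..2 * d - 1}"] split_mixture_eq_off_z[OF assms(2)])
      simp_all
  then obtain i where i: "i \<in> {1..d}"
    and meet: "conv (?Q ` {S. S \<subseteq> {1..d} \<and> i \<in> S}) \<inter> conv (?Q ` {S. S \<subseteq> {1..d} \<and> i \<notin> S}) \<noteq> {}"
    by blast
  obtain q1 q2 q3 \<mu> where q: "q1 \<in> Aset d x z i 1" "q2 \<in> Aset d x z i 2" "q3 \<in> Aset d x z i 3"
    "q2 = (\<lambda>k. \<mu> * q1 k + (1 - \<mu>) * q3 k)" "q1 \<in> Rn (2 * d - 1)" "q3 \<in> Rn (2 * d - 1)"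
    and q1: "\<forall>k\<in>{1..d}. q1 k = (if k = i then x i 1 else x k 2)"
    and q3: "\<forall>k\<in>{1..d}. q3 k = (if k = i then x i 3 else x k 2)"
    by (rule collinear_points_in_Aset[OF assms(2) i meet])
  define v where "v = (\<lambda>k. q3 k - q1 k)"
  have "v i \<noteq> 0"
    using assms(2)[rule_format, OF i] i q1 q3 by (simp add: v_def)
  moreover have "v \<in> Rn (2 * d - 1)"
    using q(5,6) by (simp add: Rn_def v_def)
  moreover have "\<forall>p\<in>line q1 v. \<forall>k\<in>{1..d} - {i}. p k = x k 2"
  proof (intro ballI)
    fix p k assume "p \<in> line q1 v" "k \<in> {1..d} - {i}"
    moreover from this(2) have "q1 k = x k 2" "q3 k = x k 2"
      using q1 q3 by auto
    ultimately show "p k = x k 2"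
      using mem_line_coord[of p q1 v k] by (simp add: v_def)
  qed
  moreover have "\<forall>j\<in>{1..3}. line q1 v \<inter> Aset d x z i j \<noteq> {}"
    unfolding v_def by (rule line_meets_collinear_points[OF q(1-4)])
  ultimately show ?thesis
    using i q(5) by (intro bexI[OF _ i] exI[of _ q1] exI[of _ v]) auto
qed

end
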